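(* For all $\ell\in[n]$ and $r\in\{1,\dots,k\}$, $$\mathbb{E}[v(\mathrm{ALG}^{\ge\ell}_r)]\ \ge\ \frac{1}{\ell}\Big(\mathbb{E}[v(\mathcal{A}(U^{\le\ell}))]+(k-1)\,\mathbb{E}[v(\mathrm{ALG}^{\ge\ell+1}_{r-1})]+(\ell-k)\,\mathbb{E}[v(\mathrm{ALG}^{\ge\ell+1}_{r})]\Big).$$
   Context: Submodular secretary setting. Let $U$ be a finite ground set of $n$ items and $k\ge1$ an integer. Let $v\colon 2^U\to\mathbb{R}_{\ge0}$ be monotone and submodular. The items arrive one per round (rounds $1,\dots,n$) in a uniformly random order; for $\ell\in[n]$, $U^{\le \ell}$ denotes the set of items arriving in rounds $1,\dots,\ell$. $\mathcal{A}$ is an offline algorithm that, for every $L\subseteq U$, returns a set $\mathcal{A}(L)\subseteq L$ with $|\mathcal{A}(L)|\le k$ and $v(\mathcal{A}(L))\ge \alpha\max\{v(T):T\subseteq L,|T|\le k\}$, where $\alpha\in(0,1]$; $\mathcal{A}(L)$ depends only on the set $L$. Random sets $\mathrm{ALG}^{\ge\ell}_r\subseteq U$ for $\ell\in\{1,\dots,n+1\}$, $r\in\{0,\dots,k\}$ are defined recursively: $\mathrm{ALG}^{\ge\ell}_0=\emptyset$ for all $\ell$, $\mathrm{ALG}^{\ge n+1}_r=\emptyset$ for all $r$, and for $\ell\in[n]$, $r\ge1$, letting $j$ be the item arriving in round $\ell$: $\mathrm{ALG}^{\ge\ell}_r=\{j\}\cup\mathrm{ALG}^{\ge\ell+1}_{r-1}$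 if $j\in\mathcal{A}(U^{\le\ell})$, and $\mathrm{ALG}^{\ge\ell}_r=\mathrm{ALG}^{\ge\ell+1}_{r}$ otherwise. (Thus $\mathrm{ALG}^{\ge\ell}_r$ is the set of the first $r$ items a run of the selection rule "accept the arriving item if it lies in $\mathcal{A}(U^{\le\ell})$ and capacity remains" would accept if started in round $\ell$ with remaining capacity $r$.) *)

theory Defs
  imports "HOL-Probability.Probability" "HOL-Combinatorics.Multiset_Permutations"
begin

text \<open>An arrival order is a list xs enumerating U without repetition;
  the item arriving in round l (1 <= l <= n) is xs ! (l - 1), and the set of items
  arriving in rounds 1..l is set (take l xs).\<close>

text \<open>alg_aux A xs l m r: selection rule started in round l with capacity r,
  where m = number of remaining rounds (n + 1 - l).\<close>
fun alg_aux :: "('a set \<Rightarrow> 'a set) \<Rightarrow> 'a list \<Rightarrow> nat \<Rightarrow> nat \<Rightarrow> nat \<Rightarrow> 'a set" where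
  "alg_aux A xs l 0 r = {}"
| "alg_aux A xs l (Suc m) 0 = {}"
| "alg_aux A xs l (Suc m) (Suc r) =
     (if xs ! (l - 1) \<in> A (set (take l xs))
      then insert (xs ! (l - 1)) (alg_aux A xs (Suc l) m r)
      else alg_aux A xs (Suc l) m (Suc r))"

text \<open>ALG^{>= l}_r for the arrival order xs, for 1 <= l <= length xs + 1.\<close>
definition ALG :: "('a set \<Rightarrow> 'a set) \<Rightarrow> 'a list \<Rightarrow> nat \<Rightarrow> nat \<Rightarrow> 'a set" where
  "ALG A xs l r = alg_aux A xs l (length xs + 1 - l) r"

definition monotone_on_sets :: "'a set \<Rightarrow> ('a set \<Rightarrow> real) \<Rightarrow> bool" where
  "monotone_on_sets U v \<longleftrightarrow> (\<forall>S T. S \<subseteq> T \<and> T \<subseteq> U \<longrightarrow> v S \<le> v T)"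

definition submodular_on :: "'a set \<Rightarrow> ('a set \<Rightarrow> real) \<Rightarrow> bool" where
  "submodular_on U v \<longleftrightarrow> (\<forall>S T. S \<subseteq> U \<and> T \<subseteq> U \<longrightarrow> v (S \<union> T) + v (S \<inter> T) \<le> v S + v T)"

definition random_order :: "'a set \<Rightarrow> 'a list pmf" where
  "random_order U = pmf_of_set (permutations_of_set U)"

end

theory Submission
  imports Defs
begin

text \<open>Exchanging the item of round l with the item of any round i \<le> l is a bijection of the
  arrival orders that fixes U^{\<le>l} and all later arrivals, hence fixes every ALG^{\<ge>l+1}_r; only
  the item seen in round l changes, and averaging over the l exchanges makes it range over all of
  U^{\<le>l}. For a fixed order with L = U^{\<le>l}, S' = ALG^{\<ge>l+1}_{r-1} \<subseteq> S = ALG^{\<ge>l+1}_r,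
  the items of A(L) then contribute v(S' + j) and the others v(S); submodularity bounds the first
  part by v(A(L) \<union> S') + (|A(L)| - 1) v(S'), and monotonicity with |A(L)| \<le> k finishes.\<close>

definition swap_list :: "nat \<Rightarrow> nat \<Rightarrow> 'a list \<Rightarrow> 'a list" where
  "swap_list i j xs = xs[i := xs ! j, j := xs ! i]"

lemma length_swap_list [simp]: "length (swap_list i j xs) = length xs"
  by (simp add: swap_list_def)

lemma swap_list_swap_list:
  "i < length xs \<Longrightarrow> j < length xs \<Longrightarrow> swap_list i j (swap_list i j xs) = xs"
  unfolding swap_list_def by (rule nth_equalityI) (auto simp: nth_list_update)

lemma swap_list_in_permutations_of_set:
  "xs \<in> permutations_of_set U \<Longrightarrow> i < length xs \<Longrightarrow> j < length xs
   \<Longrightarrow> swap_list i j xs \<in> permutations_of_set U"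
  unfolding swap_list_def permutations_of_set_def by auto

lemma nth_swap_list_right: "i < length xs \<Longrightarrow> j < length xs \<Longrightarrow> swap_list i j xs ! j = xs ! i"
  by (simp add: swap_list_def)

lemma set_take_swap_list:
  assumes "i < l" "j < l" "l \<le> length xs"
  shows "set (take l (swap_list i j xs)) = set (take l xs)"
proof -
  have "take l (swap_list i j xs) = (take l xs)[i := take l xs ! j, j := take l xs ! i]"
    using assms by (simp add: swap_list_def take_update_swap)
  then show ?thesis using assms set_swap[of i "take l xs" j] by simp
qed

lemma drop_swap_list: "i < l \<Longrightarrow> j < l \<Longrightarrow> drop l (swap_list i j xs) = drop l xs"
  by (simp add: swap_list_def)

lemma set_pmf_random_order: "finite U \<Longrightarrow> set_pmf (random_order U) = permutations_of_set U"
  unfolding random_order_def by (simp add: set_pmf_of_set)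

lemma integrable_random_order:
  fixes f :: "'a list \<Rightarrow> real"
  shows "finite U \<Longrightarrow> integrable (random_order U) f"
  by (intro integrable_measure_pmf_finite) (simp add: set_pmf_random_order)

lemma expectation_random_order_swap_list:
  fixes f :: "'a list \<Rightarrow> real"
  assumes "finite U" "i < card U" "j < card U"
  shows "measure_pmf.expectation (random_order U) (\<lambda>xs. f (swap_list i j xs))
       = measure_pmf.expectation (random_order U) f"
proof -
  let ?P = "permutations_of_set U"
  have len: "xs \<in> ?P \<Longrightarrow> length xs = card U" for xs
    by (rule length_finite_permutations_of_set)
  have "bij_betw (swap_list i j) ?P ?P"
    by (rule bij_betw_byWitness[where f' = "swap_list i j"])
       (use assms len in \<open>auto simp: swap_list_swap_list intro: swap_list_in_permutations_of_set\<close>)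
  then have "map_pmf (swap_list i j) (random_order U) = random_order U"
    unfolding random_order_def using assms(1) by (intro map_pmf_of_set_bij_betw) auto
  then show ?thesis by (metis integral_map_pmf)
qed

text \<open>The rule run from round l only reads U^{\<le>l'} and the item of round l' for l' \<ge> l.\<close>

lemma alg_aux_cong_prefix_set:
  assumes "length ys = length zs" "set (take p ys) = set (take p zs)" "drop p ys = drop p zs"
    and "p < l" "l + m \<le> length ys + 1"
  shows "alg_aux A ys l m r = alg_aux A zs l m r"
  using assms(4,5)
proof (induction m arbitrary: l r)
  case 0
  then show ?case by simp
next
  case (Suc m)
  have "ys ! (l - 1) = drop p ys ! (l - 1 - p)" "zs ! (l - 1) = drop p zs ! (l - 1 - p)"
    using Suc.prems assms(1) by auto
  then have same_item: "ys ! (l - 1) = zs ! (l - 1)"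
    using assms(3) by simp
  have "take l ys = take p ys @ take (l - p) (drop p ys)"
    "take l zs = take p zs @ take (l - p) (drop p zs)"
    using Suc.prems take_add[of p "l - p"] by simp_all
  then have same_prefix: "set (take l ys) = set (take l zs)"
    using assms(2,3) by simp
  have "alg_aux A ys (Suc l) m r' = alg_aux A zs (Suc l) m r'" for r'
    using Suc.IH Suc.prems by simp
  with same_item same_prefix show ?case
    by (cases r) simp_all
qed

lemma ALG_cong_prefix_set:
  assumes "length ys = length zs" "set (take p ys) = set (take p zs)" "drop p ys = drop p zs"
    and "p < l" "l \<le> length ys + 1"
  shows "ALG A ys l r = ALG A zs l r"
  using alg_aux_cong_prefix_set[OF assms(1-4), of "length ys + 1 - l"] assms(1,5)
  unfolding ALG_def by simp

lemma ALG_Suc: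
  assumes "1 \<le> l" "l \<le> length xs"
  shows "ALG A xs l (Suc r) =
    (if xs ! (l - 1) \<in> A (set (take l xs)) then insert (xs ! (l - 1)) (ALG A xs (l + 1) r)
     else ALG A xs (l + 1) (Suc r))"
proof -
  have "length xs + 1 - l = Suc (length xs + 1 - (l + 1))"
    using assms by simp
  then show ?thesis
    unfolding ALG_def by simp
qed

lemma alg_aux_mono_capacity: "alg_aux A xs l m r \<subseteq> alg_aux A xs l m (Suc r)"
proof (induction m arbitrary: l r)
  case (Suc m)
  then show ?case by (cases r) auto
qed simp

lemma ALG_mono_capacity: "ALG A xs l r \<subseteq> ALG A xs l (Suc r)"
  unfolding ALG_def by (rule alg_aux_mono_capacity)

lemma alg_aux_subset_set:
  assumes "\<And>L. L \<subseteq> set xs \<Longrightarrow> A L \<subseteq> L"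
  shows "alg_aux A xs l m r \<subseteq> set xs"
proof (induction m arbitrary: l r)
  case (Suc m)
  have "A (set (take l xs)) \<subseteq> set xs"
    using assms[OF set_take_subset] set_take_subset by (rule order_trans)
  with Suc.IH show ?case by (cases r) auto
qed simp

lemma ALG_subset_set: "(\<And>L. L \<subseteq> set xs \<Longrightarrow> A L \<subseteq> L) \<Longrightarrow> ALG A xs l r \<subseteq> set xs"
  unfolding ALG_def by (rule alg_aux_subset_set)

lemma ALG_swap_into_round:
  assumes "i < l" "l \<le> length xs"
  defines "xs' \<equiv> swap_list i (l - 1) xs"
  shows "ALG A xs' l (Suc r) =
    (if xs ! i \<in> A (set (take l xs)) then insert (xs ! i) (ALG A xs (l + 1) r)
     else ALG A xs (l + 1) (Suc r))"
proof -
  have prefix: "set (take l xs') = set (take l xs)"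
    unfolding xs'_def using assms by (intro set_take_swap_list) auto
  have tail: "ALG A xs' (l + 1) r' = ALG A xs (l + 1) r'" for r'
    unfolding xs'_def using assms
    by (intro ALG_cong_prefix_set[where p = l]) (auto simp: set_take_swap_list drop_swap_list)
  have "xs' ! (l - 1) = xs ! i"
    unfolding xs'_def using assms by (intro nth_swap_list_right) auto
  with prefix tail show ?thesis
    using ALG_Suc[of l xs' A r] assms unfolding xs'_def by simp
qed

lemma submodular_sum_insert_ge:
  assumes "finite B" "B \<subseteq> U" "S \<subseteq> U" "monotone_on_sets U v" "submodular_on U v"
  shows "v (B \<union> S) + (real (card B) - 1) * v S \<le> (\<Sum>j\<in>B. v (insert j S))"
  using assms(1,2)
proof (induction B rule: finite_induct)
  case empty
  then show ?case by simp
next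
  case (insert b B)
  have bS: "insert b S \<subseteq> U" and BS: "B \<union> S \<subseteq> U"
    using insert.prems assms(3) by auto
  have "v (insert b S \<union> (B \<union> S)) + v (insert b S \<inter> (B \<union> S)) \<le> v (insert b S) + v (B \<union> S)"
    using assms(5) bS BS unfolding submodular_on_def by metis
  moreover have "insert b S \<union> (B \<union> S) = insert b B \<union> S"
    by auto
  moreover have "v S \<le> v (insert b S \<inter> (B \<union> S))"
    using assms(4) BS unfolding monotone_on_sets_def
    by (metis Int_greatest Int_lower2 Un_upper2 order_trans subset_insertI)
  ultimately show ?case
    using insert by (simp add: algebra_simps)
qed

text \<open>The sum is the rule's value in round l when j \<in> L is the item offered there and B is
  the set of items it would accept.\<close>

lemma submodular_selection_sum_ge:
  assumes "finite L" "L \<subseteq> U" "B \<subseteq> L" "card B \<le> k" "S' \<subseteq> S" "S \<subseteq> U"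
    and mono: "monotone_on_sets U v" and submod: "submodular_on U v"
  shows "v B + (real k - 1) * v S' + (real (card L) - real k) * v S
    \<le> (\<Sum>j\<in>L. if j \<in> B then v (insert j S') else v S)"
proof -
  have finB: "finite B" and BU: "B \<subseteq> U" and S'U: "S' \<subseteq> U"
    using assms finite_subset by auto
  have "(\<Sum>j\<in>L. if j \<in> B then v (insert j S') else v S)
      = (\<Sum>j\<in>B. v (insert j S')) + (real (card L) - real (card B)) * v S"
    using assms(1,3) finB
    by (simp add: sum.If_cases Int_absorb1 Diff_eq[symmetric] card_Diff_subset card_mono of_nat_diff)
  moreover have "v (B \<union> S') + (real (card B) - 1) * v S' \<le> (\<Sum>j\<in>B. v (insert j S'))"
    by (rule submodular_sum_insert_ge[OF finB BU S'U mono submod])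
  moreover have "v B \<le> v (B \<union> S')"
    using mono BU S'U unfolding monotone_on_sets_def by blast
  moreover have "0 \<le> (real k - real (card B)) * (v S - v S')"
    using mono assms(4-6) unfolding monotone_on_sets_def by simp
  ultimately show ?thesis
    by (simp add: algebra_simps)
qed

lemma sum_ALG_swap_into_round_ge:
  assumes "distinct xs" "l \<le> length xs"
    and A: "\<And>L. L \<subseteq> set xs \<Longrightarrow> A L \<subseteq> L \<and> card (A L) \<le> k"
    and mono: "monotone_on_sets (set xs) v" and submod: "submodular_on (set xs) v"
  shows "v (A (set (take l xs))) + (real k - 1) * v (ALG A xs (l + 1) r)
      + (real l - real k) * v (ALG A xs (l + 1) (Suc r))
    \<le> (\<Sum>i<l. v (ALG A (swap_list i (l - 1) xs) l (Suc r)))"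
proof -
  define L where "L = set (take l xs)"
  define S' where "S' = ALG A xs (l + 1) r"
  define S where "S = ALG A xs (l + 1) (Suc r)"
  define g where "g j = (if j \<in> A L then v (insert j S') else v S)" for j
  have LU: "L \<subseteq> set xs"
    unfolding L_def by (rule set_take_subset)
  have card_L: "card L = l"
    unfolding L_def using assms(1,2) by (simp add: distinct_card)
  have L_nth: "L = (!) xs ` {..<l}" and inj: "inj_on ((!) xs) {..<l}"
    unfolding L_def using assms(1,2) by (auto simp: nth_image[symmetric] atLeast0LessThan inj_on_nth)
  have SU: "S \<subseteq> set xs"
    unfolding S_def using A by (intro ALG_subset_set) blast
  have "v (ALG A (swap_list i (l - 1) xs) l (Suc r)) = g (xs ! i)" if "i < l" for i
    using ALG_swap_into_round[OF that assms(2)] unfolding g_def L_def S'_def S_def by simp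
  then have "(\<Sum>i<l. v (ALG A (swap_list i (l - 1) xs) l (Suc r))) = (\<Sum>i<l. g (xs ! i))"
    by simp
  also have "\<dots> = sum g L"
    using sum.reindex[OF inj, of g] L_nth by simp
  finally show ?thesis
    using submodular_selection_sum_ge[OF _ LU _ _ _ SU mono submod, of "A L" k S'] A[OF LU] card_L
    unfolding g_def L_def S'_def S_def by (simp add: ALG_mono_capacity)
qed

theorem mainTheorem3:
  fixes U :: "'a set" and k :: nat and v :: "'a set \<Rightarrow> real"
    and A :: "'a set \<Rightarrow> 'a set" and \<alpha> :: real and l r :: nat
  assumes finU: "finite U"
    and k: "k \<ge> 1"
    and nonneg: "\<forall>S. S \<subseteq> U \<longrightarrow> v S \<ge> 0"
    and mono: "monotone_on_sets U v"
    and submod: "submodular_on U v"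
    and alpha: "0 < \<alpha>" "\<alpha> \<le> 1"
    and A_sub: "\<forall>L. L \<subseteq> U \<longrightarrow> A L \<subseteq> L \<and> card (A L) \<le> k"
    and A_approx: "\<forall>L. L \<subseteq> U \<longrightarrow>
        v (A L) \<ge> \<alpha> * Max {v T | T. T \<subseteq> L \<and> card T \<le> k}"
    and l: "1 \<le> l" "l \<le> card U"
    and r: "1 \<le> r" "r \<le> k"
  shows "measure_pmf.expectation (random_order U) (\<lambda>xs. v (ALG A xs l r))
    \<ge> (1 / real l) *
       (measure_pmf.expectation (random_order U) (\<lambda>xs. v (A (set (take l xs))))
        + (real k - 1) * measure_pmf.expectation (random_order U) (\<lambda>xs. v (ALG A xs (l + 1) (r - 1)))
        + (real l - real k) * measure_pmf.expectation (random_order U) (\<lambda>xs. v (ALG A xs (l + 1) r)))"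
proof -
  obtain r' where r': "r = Suc r'"
    using r by (cases r) auto
  let ?E = "measure_pmf.expectation (random_order U)"
  let ?f = "\<lambda>xs. v (ALG A xs l r)"
  note integrable = integrable_random_order[OF finU]
  have pointwise: "v (A (set (take l xs))) + (real k - 1) * v (ALG A xs (l + 1) (r - 1))
      + (real l - real k) * v (ALG A xs (l + 1) r) \<le> (\<Sum>i<l. ?f (swap_list i (l - 1) xs))"
    if "xs \<in> set_pmf (random_order U)" for xs
  proof -
    have "distinct xs" "set xs = U" "length xs = card U"
      using that finU
      by (auto simp: set_pmf_random_order permutations_of_setD length_finite_permutations_of_set)
    then show ?thesis
      using sum_ALG_swap_into_round_ge[of xs l A k v r'] A_sub mono submod l r' by simp
  qed
  have "?E (\<lambda>xs. v (A (set (take l xs)))) + (real k - 1) * ?E (\<lambda>xs. v (ALG A xs (l + 1) (r - 1)))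
      + (real l - real k) * ?E (\<lambda>xs. v (ALG A xs (l + 1) r))
    = ?E (\<lambda>xs. v (A (set (take l xs))) + (real k - 1) * v (ALG A xs (l + 1) (r - 1))
      + (real l - real k) * v (ALG A xs (l + 1) r))"
    using integrable by simp
  also have "\<dots> \<le> ?E (\<lambda>xs. \<Sum>i<l. ?f (swap_list i (l - 1) xs))"
    using integrable pointwise by (intro integral_mono_AE AE_pmfI) auto
  also have "\<dots> = (\<Sum>i<l. ?E (\<lambda>xs. ?f (swap_list i (l - 1) xs)))"
    using integrable by simp
  also have "\<dots> = real l * ?E ?f"
    using expectation_random_order_swap_list[OF finU, of _ "l - 1" ?f] l by simp
  finally show ?thesis
    using l by (simp add: field_simps)
qed

end
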